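(* Let $I\ge0$, $\beta>0$, and let $\psi=(\psi_0,\dots,\psi_I)$ be a vector of continuous functions $[0,\beta]\to[0,1]$. Then $\psi$ is a valid cumulative occupancy path if and only if, for each $0\le i\le I$ and $0\le x<y\le\beta$: (a) $\psi_i(x)\ge\psi_{i-1}(x)$; (b) $\psi_i(x)\ge\psi_i(y)$; (c) $\sum_{k=0}^I(\psi_k(x)-\psi_k(y))\le y-x$. (Here $\psi_{-1}\equiv0$.)
   Context: $S_I=\{\gamma\in\mathbb{R}^{I+2}:\gamma_j\ge0,\sum_{j=0}^{I+1}\gamma_j=1\}$, components indexed $0,\dots,I,I+$. An occupancy function $\gamma:[0,\beta]\to\mathbb{R}^{I+2}$ is valid if it is absolutely continuous, $\gamma(x)\in S_I$ for all $x$, and its rate $\theta$, defined by $\dot\gamma_0=-\theta_0$, $\dot\gamma_j=\theta_{j-1}-\theta_j$ ($1\le j\le I$), $\dot\gamma_{I+}=\theta_I$ and $\sum_{j}\theta_j=1$, lies in $S_I$ for a.e. $x$. Its cumulative occupancy function is $\psi_i(x)=\sum_{j=0}^i\gamma_j(x)$, $i=0,\dots,I$ (with $\gamma_{I+}=1-\psi_I$). $\psi$ is a valid cumulative occupancy path if it is the cumulative occupancy function of a valid occupancy function. *)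

theory Defs
  imports "HOL-Analysis.Analysis"
begin

text \<open>Vectors in R^(I+2) are represented as functions nat => real, components
  0..I+1, where component I+1 plays the role of the index I+.\<close>

definition in_simplex :: "nat \<Rightarrow> (nat \<Rightarrow> real) \<Rightarrow> bool" where
  "in_simplex I v \<longleftrightarrow> (\<forall>j\<le>I+1. 0 \<le> v j) \<and> (\<Sum>j\<le>I+1. v j) = 1"

definition abs_continuous_on :: "real \<Rightarrow> real \<Rightarrow> (real \<Rightarrow> real) \<Rightarrow> bool" where
  "abs_continuous_on a b f \<longleftrightarrow>
     (\<forall>\<epsilon>>0. \<exists>\<delta>>0. \<forall>(n::nat) (u::nat \<Rightarrow> real) (v::nat \<Rightarrow> real).
        (\<forall>k<n. a \<le> u k \<and> u k \<le> v k \<and> v k \<le> b) \<and>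
        (\<forall>k<n. \<forall>l<n. k \<noteq> l \<longrightarrow> v k \<le> u l \<or> v l \<le> u k) \<and>
        (\<Sum>k<n. v k - u k) < \<delta>
        \<longrightarrow> (\<Sum>k<n. \<bar>f (v k) - f (u k)\<bar>) < \<epsilon>)"

definition valid_occupancy :: "nat \<Rightarrow> real \<Rightarrow> (nat \<Rightarrow> real \<Rightarrow> real) \<Rightarrow> bool" where
  "valid_occupancy I \<beta> \<gamma> \<longleftrightarrow>
     (\<forall>j\<le>I+1. abs_continuous_on 0 \<beta> (\<gamma> j)) \<and>
     (\<forall>x\<in>{0..\<beta>}. in_simplex I (\<lambda>j. \<gamma> j x)) \<and>
     (\<exists>\<theta> :: nat \<Rightarrow> real \<Rightarrow> real.
        AE x in lborel. x \<in> {0..\<beta>} \<longrightarrow>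
          (\<gamma> 0 has_real_derivative - \<theta> 0 x) (at x within {0..\<beta>}) \<and>
          (\<forall>j\<in>{1..I}. (\<gamma> j has_real_derivative \<theta> (j-1) x - \<theta> j x) (at x within {0..\<beta>})) \<and>
          (\<gamma> (I+1) has_real_derivative \<theta> I x) (at x within {0..\<beta>}) \<and>
          in_simplex I (\<lambda>j. \<theta> j x))"

definition cumulative_occupancy :: "(nat \<Rightarrow> real \<Rightarrow> real) \<Rightarrow> nat \<Rightarrow> real \<Rightarrow> real" where
  "cumulative_occupancy \<gamma> i x = (\<Sum>j\<le>i. \<gamma> j x)"

definition valid_cumulative_path :: "nat \<Rightarrow> real \<Rightarrow> (nat \<Rightarrow> real \<Rightarrow> real) \<Rightarrow> bool" where
  "valid_cumulative_path I \<beta> \<psi> \<longleftrightarrow>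
     (\<exists>\<gamma>. valid_occupancy I \<beta> \<gamma> \<and>
        (\<forall>i\<le>I. \<forall>x\<in>{0..\<beta>}. \<psi> i x = cumulative_occupancy \<gamma> i x))"

end

theory Submission
  imports Defs
begin

(* Necessity: the cumulative occupancies are absolutely continuous, with derivative -\<theta>_i \<le> 0
   almost everywhere, while \<Sum>_i \<psi>_i(x) + x has derivative \<theta>_{I+} \<ge> 0.  An absolutely continuous
   function whose derivative is nonnegative off a null set is nondecreasing, which gives (b) and (c);
   (a) is \<gamma>_i \<ge> 0.
   Sufficiency: (b) and (c) make every \<psi>_i nonincreasing and 1-Lipschitz, so by Lebesgue's
   differentiation theorem (proved below from the Vitali covering theorem) all \<psi>_i are
   differentiable almost everywhere.  Then \<gamma>_i = \<psi>_i - \<psi>_{i-1}, \<gamma>_{I+} = 1 - \<psi>_I with rates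
   \<theta>_i = -\<psi>_i' and \<theta>_{I+} = 1 + \<Sum>_i \<psi>_i' is a valid occupancy function: (a) makes \<gamma> a point of
   the simplex, and the rates are nonnegative by (b) and (c). *)

section \<open>Absolute continuity\<close>

definition nonoverlapping_intervals :: "real \<Rightarrow> real \<Rightarrow> nat \<Rightarrow> (nat \<Rightarrow> real) \<Rightarrow> (nat \<Rightarrow> real) \<Rightarrow> bool" where
  "nonoverlapping_intervals a b n u v \<longleftrightarrow>
     (\<forall>k<n. a \<le> u k \<and> u k \<le> v k \<and> v k \<le> b) \<and> (\<forall>k<n. \<forall>l<n. k \<noteq> l \<longrightarrow> v k \<le> u l \<or> v l \<le> u k)"

lemma abs_continuous_on_iff:
  "abs_continuous_on a b f \<longleftrightarrow>
     (\<forall>\<epsilon>>0. \<exists>\<delta>>0. \<forall>n u v. nonoverlapping_intervals a b n u v \<and> (\<Sum>k<n. v k - u k) < \<delta> \<longrightarrow>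
        (\<Sum>k<n. \<bar>f (v k) - f (u k)\<bar>) < \<epsilon>)"
  unfolding abs_continuous_on_def nonoverlapping_intervals_def by (simp add: conj_assoc)

lemma abs_continuous_onD:
  assumes "abs_continuous_on a b f" "\<epsilon> > 0"
  obtains \<delta> where "\<delta> > 0" "\<And>n u v. nonoverlapping_intervals a b n u v \<Longrightarrow> (\<Sum>k<n. v k - u k) < \<delta> \<Longrightarrow>
    (\<Sum>k<n. \<bar>f (v k) - f (u k)\<bar>) < \<epsilon>"
  using assms unfolding abs_continuous_on_iff by metis

lemma abs_continuous_on_lipschitz:
  assumes "L-lipschitz_on {a..b} f"
  shows "abs_continuous_on a b f"
  unfolding abs_continuous_on_iff
proof (intro allI impI)
  fix \<epsilon> :: real assume "\<epsilon> > 0"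
  have L: "0 \<le> L" using lipschitz_on_nonneg[OF assms] .
  show "\<exists>\<delta>>0. \<forall>n u v. nonoverlapping_intervals a b n u v \<and> (\<Sum>k<n. v k - u k) < \<delta> \<longrightarrow>
      (\<Sum>k<n. \<bar>f (v k) - f (u k)\<bar>) < \<epsilon>"
  proof (intro exI[of _ "\<epsilon> / (L + 1)"] conjI allI impI)
    show "\<epsilon> / (L + 1) > 0" using \<open>\<epsilon> > 0\<close> L by simp
    fix n u v assume H: "nonoverlapping_intervals a b n u v \<and> (\<Sum>k<n. v k - u k) < \<epsilon> / (L + 1)"
    have "(\<Sum>k<n. \<bar>f (v k) - f (u k)\<bar>) \<le> (\<Sum>k<n. L * (v k - u k))"
    proof (rule sum_mono)
      fix k assume "k \<in> {..<n}"
      then have "u k \<in> {a..b}" "v k \<in> {a..b}" "u k \<le> v k"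
        using H by (auto simp: nonoverlapping_intervals_def)
      then show "\<bar>f (v k) - f (u k)\<bar> \<le> L * (v k - u k)"
        using lipschitz_onD[OF assms, of "v k" "u k"] by (simp add: dist_real_def)
    qed
    also have "\<dots> = L * (\<Sum>k<n. v k - u k)" by (simp add: sum_distrib_left)
    also have "\<dots> \<le> L * (\<epsilon> / (L + 1))" using H L by (intro mult_left_mono) auto
    also have "\<dots> < \<epsilon>" using L \<open>\<epsilon> > 0\<close> by (simp add: field_simps)
    finally show "(\<Sum>k<n. \<bar>f (v k) - f (u k)\<bar>) < \<epsilon>" .
  qed
qed

lemma abs_continuous_on_add:
  assumes f: "abs_continuous_on a b f" and g: "abs_continuous_on a b g"
  shows "abs_continuous_on a b (\<lambda>x. f x + g x)"
  unfolding abs_continuous_on_iff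
proof (intro allI impI)
  fix \<epsilon> :: real assume "\<epsilon> > 0"
  then have "\<epsilon> / 2 > 0" by simp
  obtain d1 where d1: "d1 > 0" "\<And>n u v. nonoverlapping_intervals a b n u v \<Longrightarrow> (\<Sum>k<n. v k - u k) < d1 \<Longrightarrow>
      (\<Sum>k<n. \<bar>f (v k) - f (u k)\<bar>) < \<epsilon> / 2"
    using abs_continuous_onD[OF f \<open>\<epsilon> / 2 > 0\<close>] by metis
  obtain d2 where d2: "d2 > 0" "\<And>n u v. nonoverlapping_intervals a b n u v \<Longrightarrow> (\<Sum>k<n. v k - u k) < d2 \<Longrightarrow>
      (\<Sum>k<n. \<bar>g (v k) - g (u k)\<bar>) < \<epsilon> / 2"
    using abs_continuous_onD[OF g \<open>\<epsilon> / 2 > 0\<close>] by metis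
  show "\<exists>\<delta>>0. \<forall>n u v. nonoverlapping_intervals a b n u v \<and> (\<Sum>k<n. v k - u k) < \<delta> \<longrightarrow>
      (\<Sum>k<n. \<bar>f (v k) + g (v k) - (f (u k) + g (u k))\<bar>) < \<epsilon>"
  proof (intro exI[of _ "min d1 d2"] conjI allI impI)
    show "min d1 d2 > 0" using d1 d2 by simp
    fix n u v assume H: "nonoverlapping_intervals a b n u v \<and> (\<Sum>k<n. v k - u k) < min d1 d2"
    have "(\<Sum>k<n. \<bar>f (v k) + g (v k) - (f (u k) + g (u k))\<bar>) \<le>
        (\<Sum>k<n. \<bar>f (v k) - f (u k)\<bar>) + (\<Sum>k<n. \<bar>g (v k) - g (u k)\<bar>)"
      unfolding sum.distrib[symmetric] by (rule sum_mono) linarith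
    then show "(\<Sum>k<n. \<bar>f (v k) + g (v k) - (f (u k) + g (u k))\<bar>) < \<epsilon>"
      using d1(2)[of n u v] d2(2)[of n u v] H by simp
  qed
qed

lemma abs_continuous_on_minus:
  "abs_continuous_on a b f \<Longrightarrow> abs_continuous_on a b (\<lambda>x. - f x)"
  unfolding abs_continuous_on_def by (simp add: abs_minus_commute)

lemma abs_continuous_on_sum:
  assumes "finite S" "\<And>j. j \<in> S \<Longrightarrow> abs_continuous_on a b (f j)"
  shows "abs_continuous_on a b (\<lambda>x. \<Sum>j\<in>S. f j x)"
  using assms
proof (induction S rule: finite_induct)
  case empty
  show ?case using abs_continuous_on_lipschitz[OF lipschitz_on_constant] by simp
next
  case (insert j S)
  then show ?case by (simp add: abs_continuous_on_add)
qed

lemma abs_continuous_on_subinterval: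
  assumes "abs_continuous_on a b f" "a \<le> c" "d \<le> b"
  shows "abs_continuous_on c d f"
proof -
  have "nonoverlapping_intervals a b n u v" if "nonoverlapping_intervals c d n u v" for n u v
    using that assms(2,3) unfolding nonoverlapping_intervals_def by force
  then show ?thesis using assms(1) unfolding abs_continuous_on_iff by meson
qed

lemma negligible_outer_open:
  assumes "negligible N" "0 < e"
  obtains T where "open T" "N \<subseteq> T" "T \<in> lmeasurable" "measure lebesgue T < e"
proof -
  obtain T where T: "open T" "N \<subseteq> T" "T - N \<in> lmeasurable" "emeasure lebesgue (T - N) < ennreal e"
    using sets_lebesgue_outer_open[OF negligible_imp_sets[OF assms(1)] assms(2)] by blast
  have N: "N \<in> lmeasurable" "measure lebesgue N = 0"
    using assms(1) negligible_iff_measure by blast+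
  have T_eq: "T = (T - N) \<union> N" using T(2) by blast
  have "T \<in> lmeasurable" using T(3) N by (subst T_eq) (rule fmeasurable.Un)
  moreover have "measure lebesgue T \<le> measure lebesgue (T - N) + measure lebesgue N"
    using T(3) N by (subst T_eq) (intro measure_Un_le; auto)
  moreover have "measure lebesgue (T - N) < e"
    using T(3,4) by (simp add: emeasure_eq_measure2 ennreal_less_iff)
  ultimately show ?thesis using that T N by force
qed

lemma tagged_division_of_real_intervalD:
  assumes "p tagged_division_of {a..b::real}" "(x, K) \<in> p"
  shows "K = {Inf K..Sup K}" "Inf K \<le> x" "x \<le> Sup K" "K \<subseteq> {a..b}"
proof -
  obtain u v where K: "K = cbox u v" using tagged_division_ofD(4)[OF assms] by blast
  moreover have "x \<in> K" using tagged_division_ofD(2)[OF assms] .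
  ultimately show "K = {Inf K..Sup K}" "Inf K \<le> x" "x \<le> Sup K" by auto
  show "K \<subseteq> {a..b}" using tagged_division_ofD(3)[OF assms] .
qed

lemma sum_interval_lengths_le_measure:
  assumes p: "p tagged_division_of {a..b}" and "q \<subseteq> p" and U: "\<Union>(snd ` q) \<subseteq> U" "U \<in> lmeasurable"
  shows "(\<Sum>(x, K)\<in>q. Sup K - Inf K) \<le> measure lebesgue U"
proof -
  have "p tagged_partial_division_of {a..b}" using p by (simp add: tagged_division_of_def)
  then have q: "q tagged_division_of \<Union>(snd ` q)"
    using \<open>q \<subseteq> p\<close> by (metis tagged_partial_division_of_Union_self tagged_partial_division_subset)
  have "(\<Sum>(x, K)\<in>q. Sup K - Inf K) = (\<Sum>(x, K)\<in>q. measure lebesgue K)"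
  proof (intro sum.cong refl, clarify)
    fix x K assume "(x, K) \<in> q"
    then have "(x, K) \<in> p" using \<open>q \<subseteq> p\<close> by blast
    note K = tagged_division_of_real_intervalD[OF p this]
    show "Sup K - Inf K = measure lebesgue K"
      using order_trans[OF K(2,3)] by (subst K(1)) simp
  qed
  also have "\<dots> = (\<Sum>K\<in>snd ` q. measure lebesgue K)"
    by (rule sum.over_tagged_division_lemma[OF q]) (simp add: box_eq_empty)
  also have "\<dots> = measure lebesgue (\<Union>(snd ` q))"
    using division_of_tagged_division[OF q] by (rule content_division)
  also have "\<dots> \<le> measure lebesgue U"
    using lmeasurable_division[OF division_of_tagged_division[OF q]] U by (intro measure_mono_fmeasurable) auto
  finally show ?thesis .
qed

lemma abs_continuous_on_tagged_division:
  assumes "abs_continuous_on a b f" "\<epsilon> > 0"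
  obtains \<delta> where "\<delta> > 0"
    "\<And>p q. p tagged_division_of {a..b} \<Longrightarrow> q \<subseteq> p \<Longrightarrow> (\<Sum>(x, K)\<in>q. Sup K - Inf K) < \<delta> \<Longrightarrow>
       (\<Sum>(x, K)\<in>q. \<bar>f (Sup K) - f (Inf K)\<bar>) < \<epsilon>"
proof -
  obtain \<delta> where \<delta>: "\<delta> > 0" "\<And>n u v. nonoverlapping_intervals a b n u v \<Longrightarrow> (\<Sum>k<n. v k - u k) < \<delta> \<Longrightarrow>
      (\<Sum>k<n. \<bar>f (v k) - f (u k)\<bar>) < \<epsilon>"
    using abs_continuous_onD[OF assms] by metis
  have "(\<Sum>(x, K)\<in>q. \<bar>f (Sup K) - f (Inf K)\<bar>) < \<epsilon>"
    if p: "p tagged_division_of {a..b}" and "q \<subseteq> p" and small: "(\<Sum>(x, K)\<in>q. Sup K - Inf K) < \<delta>" for p q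
  proof -
    note K = tagged_division_of_real_intervalD[OF p]
    \<comment> \<open>Degenerate intervals contribute nothing, but they would break the enumeration below,
      since a point may lie inside another interval of the division.\<close>
    define q' where "q' = {(x, K) \<in> q. Inf K < Sup K}"
    have "finite q" using p \<open>q \<subseteq> p\<close> finite_subset by blast
    have "q' \<subseteq> q" by (auto simp: q'_def)
    then have "finite q'" using \<open>finite q\<close> by (rule finite_subset)
    have degenerate: "Inf K = Sup K" if "(x, K) \<in> q - q'" for x K
      using that K(2,3)[of x K] \<open>q \<subseteq> p\<close> by (force simp: q'_def)
    obtain e where e: "bij_betw e {..<card q'} q'"
      using ex_bij_betw_nat_finite[OF \<open>finite q'\<close>] by (auto simp: atLeast0LessThan)
    define n u v where "n = card q'" and "u k = Inf (snd (e k))" and "v k = Sup (snd (e k))" for k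
    have ek: "e k \<in> p" "u k < v k" "snd (e k) = {u k..v k}" "{u k..v k} \<subseteq> {a..b}" if "k < n" for k
    proof -
      have "e k \<in> q'" using e that unfolding n_def bij_betw_def by auto
      then have "(fst (e k), snd (e k)) \<in> p" "Inf (snd (e k)) < Sup (snd (e k))"
        using \<open>q \<subseteq> p\<close> by (auto simp: q'_def)
      then show "e k \<in> p" "u k < v k" "snd (e k) = {u k..v k}" "{u k..v k} \<subseteq> {a..b}"
        using K(1,4)[of "fst (e k)" "snd (e k)"] by (auto simp: u_def v_def)
    qed
    have nonoverlapping: "nonoverlapping_intervals a b n u v"
      unfolding nonoverlapping_intervals_def
    proof (rule conjI)
      show "\<forall>k<n. a \<le> u k \<and> u k \<le> v k \<and> v k \<le> b" using ek(2,4) by fastforce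
      show "\<forall>k<n. \<forall>l<n. k \<noteq> l \<longrightarrow> v k \<le> u l \<or> v l \<le> u k"
      proof (intro allI impI)
        fix k l assume kl: "k < n" "l < n" "k \<noteq> l"
        then have "e k \<noteq> e l" using e unfolding n_def bij_betw_def inj_on_def by auto
        then have "interior (snd (e k)) \<inter> interior (snd (e l)) = {}"
          using tagged_division_ofD(5)[OF p, of "fst (e k)" "snd (e k)" "fst (e l)" "snd (e l)"]
            ek(1)[OF kl(1)] ek(1)[OF kl(2)] by (metis prod.collapse)
        then have "{u k<..<v k} \<inter> {u l<..<v l} = {}" using ek(3) kl by simp
        show "v k \<le> u l \<or> v l \<le> u k"
        proof (rule ccontr)
          assume "\<not> (v k \<le> u l \<or> v l \<le> u k)"
          then have "(max (u k) (u l) + min (v k) (v l)) / 2 \<in> {u k<..<v k} \<inter> {u l<..<v l}"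
            using ek(2)[OF kl(1)] ek(2)[OF kl(2)] by auto
          then show False using \<open>{u k<..<v k} \<inter> {u l<..<v l} = {}\<close> by blast
        qed
      qed
    qed
    have reindex: "(\<Sum>k<n. g (u k) (v k)) = (\<Sum>(x, K)\<in>q'. g (Inf K) (Sup K))"
      for g :: "real \<Rightarrow> real \<Rightarrow> real"
      using sum.reindex_bij_betw[OF e, of "\<lambda>(x, K). g (Inf K) (Sup K)"]
      by (simp add: n_def u_def v_def case_prod_beta)
    have drop: "(\<Sum>(x, K)\<in>q'. g (Inf K) (Sup K)) = (\<Sum>(x, K)\<in>q. g (Inf K) (Sup K))"
      if "\<And>t. g t t = 0" for g :: "real \<Rightarrow> real \<Rightarrow> real"
      using \<open>finite q\<close> \<open>q' \<subseteq> q\<close> degenerate that by (intro sum.mono_neutral_left) auto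
    have "(\<Sum>k<n. v k - u k) = (\<Sum>(x, K)\<in>q. Sup K - Inf K)"
      using reindex[of "\<lambda>s t. t - s"] drop[of "\<lambda>s t. t - s"] by simp
    moreover have "(\<Sum>k<n. \<bar>f (v k) - f (u k)\<bar>) = (\<Sum>(x, K)\<in>q. \<bar>f (Sup K) - f (Inf K)\<bar>)"
      using reindex[of "\<lambda>s t. \<bar>f t - f s\<bar>"] drop[of "\<lambda>s t. \<bar>f t - f s\<bar>"] by simp
    ultimately show ?thesis
      using \<delta>(2)[OF nonoverlapping] small by simp
  qed
  then show ?thesis using that \<delta>(1) by blast
qed

lemma abs_continuous_on_le_if_locally_nondecreasing:
  assumes "a \<le> b" and ac: "abs_continuous_on a b g" and "negligible N"
    and local: "\<And>x. x \<in> {a..b} - N \<Longrightarrow>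
      \<exists>d>0. \<forall>y\<in>{a..b}. \<bar>y - x\<bar> < d \<longrightarrow> (y < x \<longrightarrow> g y \<le> g x) \<and> (x < y \<longrightarrow> g x \<le> g y)"
  shows "g a \<le> g b"
proof (rule field_le_epsilon)
  fix \<epsilon> :: real assume "\<epsilon> > 0"
  obtain \<delta> where \<delta>: "\<delta> > 0" "\<And>p q. p tagged_division_of {a..b} \<Longrightarrow> q \<subseteq> p \<Longrightarrow>
      (\<Sum>(x, K)\<in>q. Sup K - Inf K) < \<delta> \<Longrightarrow> (\<Sum>(x, K)\<in>q. \<bar>g (Sup K) - g (Inf K)\<bar>) < \<epsilon>"
    using abs_continuous_on_tagged_division[OF ac \<open>\<epsilon> > 0\<close>] by blast
  obtain T where T: "open T" "N \<subseteq> T" "T \<in> lmeasurable" "measure lebesgue T < \<delta>"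
    using negligible_outer_open[OF \<open>negligible N\<close> \<open>\<delta> > 0\<close>] by blast
  \<comment> \<open>A gauge that confines the intervals tagged in \<open>N\<close> to the small set \<open>T\<close>, and those tagged
    elsewhere to neighbourhoods on which \<open>g\<close> is nondecreasing through the tag.\<close>
  have "\<forall>x. \<exists>r>0. (x \<in> N \<longrightarrow> ball x r \<subseteq> T) \<and> (x \<in> {a..b} - N \<longrightarrow>
      (\<forall>y\<in>{a..b}. \<bar>y - x\<bar> < r \<longrightarrow> (y < x \<longrightarrow> g y \<le> g x) \<and> (x < y \<longrightarrow> g x \<le> g y)))"
  proof
    fix x show "\<exists>r>0. (x \<in> N \<longrightarrow> ball x r \<subseteq> T) \<and> (x \<in> {a..b} - N \<longrightarrow>
      (\<forall>y\<in>{a..b}. \<bar>y - x\<bar> < r \<longrightarrow> (y < x \<longrightarrow> g y \<le> g x) \<and> (x < y \<longrightarrow> g x \<le> g y)))"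
    proof (cases "x \<in> N")
      case True
      then have "x \<in> T" using T(2) by blast
      then obtain r where "r > 0" "ball x r \<subseteq> T" using openE[OF T(1)] by metis
      then show ?thesis using True by (intro exI[of _ r]) simp
    next
      case False
      show ?thesis
      proof (cases "x \<in> {a..b}")
        case True
        then show ?thesis using local[of x] False by blast
      next
        case outside: False
        show ?thesis using False outside by (intro exI[of _ 1]) auto
      qed
    qed
  qed
  then obtain r where "\<forall>x. r x > 0 \<and> (x \<in> N \<longrightarrow> ball x (r x) \<subseteq> T) \<and> (x \<in> {a..b} - N \<longrightarrow>
      (\<forall>y\<in>{a..b}. \<bar>y - x\<bar> < r x \<longrightarrow> (y < x \<longrightarrow> g y \<le> g x) \<and> (x < y \<longrightarrow> g x \<le> g y)))"
    by (metis choice)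
  then have r: "\<And>x. r x > 0" "\<And>x. x \<in> N \<Longrightarrow> ball x (r x) \<subseteq> T"
    "\<And>x y. x \<in> {a..b} - N \<Longrightarrow> y \<in> {a..b} \<Longrightarrow> \<bar>y - x\<bar> < r x \<Longrightarrow> y < x \<Longrightarrow> g y \<le> g x"
    "\<And>x y. x \<in> {a..b} - N \<Longrightarrow> y \<in> {a..b} \<Longrightarrow> \<bar>y - x\<bar> < r x \<Longrightarrow> x < y \<Longrightarrow> g x \<le> g y"
    by blast+
  obtain p where p: "p tagged_division_of {a..b}" "(\<lambda>x. ball x (r x)) fine p"
    using fine_division_exists_real[OF gauge_ball_dependent] r(1) by blast
  note K = tagged_division_of_real_intervalD[OF p(1)]
  have K_ball: "K \<subseteq> ball x (r x)" if "(x, K) \<in> p" for x K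
    using p(2) that unfolding fine_def by blast
  define q where "q = {(x, K) \<in> p. x \<in> N}"
  have "finite p" using p(1) by blast
  have "q \<subseteq> p" by (auto simp: q_def)
  have "g b - g a = (\<Sum>(x, K)\<in>p. g (Sup K) - g (Inf K))"
    using additive_tagged_division_1[OF \<open>a \<le> b\<close> p(1), of g] by simp
  also have "\<dots> = (\<Sum>(x, K)\<in>p - q. g (Sup K) - g (Inf K)) + (\<Sum>(x, K)\<in>q. g (Sup K) - g (Inf K))"
    by (rule sum.subset_diff[OF \<open>q \<subseteq> p\<close> \<open>finite p\<close>])
  finally have "g b - g a = \<dots>" .
  moreover have "(\<Sum>(x, K)\<in>p - q. g (Sup K) - g (Inf K)) \<ge> 0"
  proof (rule sum_nonneg, clarify)
    fix x K assume "(x, K) \<in> p" "(x, K) \<notin> q"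
    then have x: "x \<in> {a..b} - N"
      using tagged_division_ofD(2,3)[OF p(1)] by (fastforce simp: q_def)
    have "K = {Inf K..Sup K}" "Inf K \<le> Sup K"
      using K(1) order_trans[OF K(2,3)] \<open>(x, K) \<in> p\<close> by blast+
    then have "Inf K \<in> K" "Sup K \<in> K" by (metis atLeastAtMost_iff order_refl)+
    then have ends: "Inf K \<in> {a..b}" "Sup K \<in> {a..b}" "\<bar>Inf K - x\<bar> < r x" "\<bar>Sup K - x\<bar> < r x"
      using K(4)[OF \<open>(x, K) \<in> p\<close>] K_ball[OF \<open>(x, K) \<in> p\<close>]
      by (auto simp: dist_real_def abs_minus_commute)
    have "g (Inf K) \<le> g x"
      using r(3)[OF x ends(1,3)] K(2)[OF \<open>(x, K) \<in> p\<close>] by (cases "Inf K < x") auto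
    moreover have "g x \<le> g (Sup K)"
      using r(4)[OF x ends(2,4)] K(3)[OF \<open>(x, K) \<in> p\<close>] by (cases "x < Sup K") auto
    ultimately show "0 \<le> g (Sup K) - g (Inf K)" by simp
  qed
  moreover have "(\<Sum>(x, K)\<in>q. g (Sup K) - g (Inf K)) > - \<epsilon>"
  proof -
    have "(\<Sum>(x, K)\<in>q. Sup K - Inf K) \<le> measure lebesgue T"
    proof (rule sum_interval_lengths_le_measure[OF p(1) _ _ T(3)])
      show "\<Union>(snd ` q) \<subseteq> T" using K_ball r(2) by (force simp: q_def)
    qed (auto simp: q_def)
    then have "(\<Sum>(x, K)\<in>q. \<bar>g (Sup K) - g (Inf K)\<bar>) < \<epsilon>"
      using \<delta>(2)[OF p(1), of q] T(4) by (force simp: q_def)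
    moreover have "- \<bar>g (Sup K) - g (Inf K)\<bar> \<le> g (Sup K) - g (Inf K)" for K by linarith
    then have "- (\<Sum>(x, K)\<in>q. \<bar>g (Sup K) - g (Inf K)\<bar>) \<le> (\<Sum>(x, K)\<in>q. g (Sup K) - g (Inf K))"
      unfolding sum_negf[symmetric] by (intro sum_mono) auto
    ultimately show ?thesis by linarith
  qed
  ultimately show "g a \<le> g b + \<epsilon>" by linarith
qed

lemma has_real_derivative_pos_imp_locally_increasing:
  assumes "(g has_real_derivative D) (at x within S)" "0 < D"
  shows "\<exists>d>0. \<forall>y\<in>S. \<bar>y - x\<bar> < d \<longrightarrow> (y < x \<longrightarrow> g y \<le> g x) \<and> (x < y \<longrightarrow> g x \<le> g y)"
proof -
  obtain d1 where d1: "d1 > 0" "\<And>h. h > 0 \<Longrightarrow> x + h \<in> S \<Longrightarrow> h < d1 \<Longrightarrow> g x < g (x + h)"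
    using has_real_derivative_pos_inc_right[OF assms] by metis
  obtain d2 where d2: "d2 > 0" "\<And>h. h > 0 \<Longrightarrow> x - h \<in> S \<Longrightarrow> h < d2 \<Longrightarrow> g (x - h) < g x"
    using has_real_derivative_pos_inc_left[OF assms] by metis
  show ?thesis
  proof (intro exI[of _ "min d1 d2"] conjI ballI impI)
    show "0 < min d1 d2" using d1 d2 by simp
    fix y assume "y \<in> S" "\<bar>y - x\<bar> < min d1 d2"
    then show "y < x \<Longrightarrow> g y \<le> g x" "x < y \<Longrightarrow> g x \<le> g y"
      using d1(2)[of "y - x"] d2(2)[of "x - y"] by auto
  qed
qed

lemma abs_continuous_on_mono_on:
  assumes ac: "abs_continuous_on a b f" and "negligible N"
    and deriv: "\<And>x. x \<in> {a..b} - N \<Longrightarrow> \<exists>D\<ge>0. (f has_real_derivative D) (at x within {a..b})"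
  shows "mono_on {a..b} f"
proof (rule mono_onI)
  fix x y assume xy: "x \<in> {a..b}" "y \<in> {a..b}" "x \<le> y"
  have "f x + \<eta> * x \<le> f y + \<eta> * y" if "\<eta> > 0" for \<eta>
  proof (rule abs_continuous_on_le_if_locally_nondecreasing[OF \<open>x \<le> y\<close> _ \<open>negligible N\<close>])
    have "abs_continuous_on a b (\<lambda>t. f t + \<eta> * t)"
      using abs_continuous_on_lipschitz[OF lipschitz_on_cmult_real[OF lipschitz_on_id]]
      by (intro abs_continuous_on_add ac)
    then show "abs_continuous_on x y (\<lambda>t. f t + \<eta> * t)"
      by (rule abs_continuous_on_subinterval) (use xy in auto)
    fix z assume "z \<in> {x..y} - N"
    then have "z \<in> {a..b} - N" using xy by auto
    then obtain D where "D \<ge> 0" "(f has_real_derivative D) (at z within {a..b})"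
      using deriv by blast
    then have "(f has_real_derivative D) (at z within {x..y})"
      using xy by (auto intro: DERIV_subset)
    then have "((\<lambda>t. f t + \<eta> * t) has_real_derivative D + \<eta> * 1) (at z within {x..y})"
      by (intro DERIV_add DERIV_cmult DERIV_ident)
    then show "\<exists>d>0. \<forall>w\<in>{x..y}. \<bar>w - z\<bar> < d \<longrightarrow>
        (w < z \<longrightarrow> f w + \<eta> * w \<le> f z + \<eta> * z) \<and> (z < w \<longrightarrow> f z + \<eta> * z \<le> f w + \<eta> * w)"
      by (rule has_real_derivative_pos_imp_locally_increasing) (use \<open>D \<ge> 0\<close> that in linarith)
  qed
  show "f x \<le> f y"
  proof (rule field_le_epsilon)
    fix e :: real assume "e > 0"
    define \<eta> where "\<eta> = e / (y - x + 1)"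
    have "\<eta> > 0" "\<eta> * (y - x) \<le> e"
      using \<open>e > 0\<close> xy by (auto simp: \<eta>_def field_simps)
    then show "f x \<le> f y + e"
      using \<open>\<And>\<eta>. \<eta> > 0 \<Longrightarrow> f x + \<eta> * x \<le> f y + \<eta> * y\<close>[of \<eta>] by (simp add: algebra_simps)
  qed
qed

section \<open>Lebesgue's differentiation theorem for monotone Lipschitz functions\<close>

lemma mono_sum_increments_le:
  fixes f :: "real \<Rightarrow> real" and F :: "(real \<times> real) set"
  assumes "mono f" "finite F" "a \<le> b"
    and "\<And>i. i \<in> F \<Longrightarrow> a \<le> fst i \<and> fst i \<le> snd i \<and> snd i \<le> b"
    and "pairwise (\<lambda>i j. disjnt {fst i..snd i} {fst j..snd j}) F"
  shows "(\<Sum>i\<in>F. f (snd i) - f (fst i)) \<le> f b - f a"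
  using assms(2-5)
proof (induction "card F" arbitrary: F b rule: less_induct)
  case less
  note fin = less.prems(1) and bounds = less.prems(3) and disj = less.prems(4)
  show ?case
  proof (cases "F = {}")
    case True
    then show ?thesis using less.prems \<open>mono f\<close> by (simp add: monoD)
  next
    case False
    \<comment> \<open>The interval starting last lies to the right of all others.\<close>
    have "Max (fst ` F) \<in> fst ` F" using False fin by simp
    then obtain j where j: "j \<in> F" "fst j = Max (fst ` F)" by auto
    have left: "a \<le> fst i \<and> fst i \<le> snd i \<and> snd i \<le> fst j" if "i \<in> F - {j}" for i
    proof -
      have i: "a \<le> fst i" "fst i \<le> snd i" and "fst j \<le> snd j"
        using bounds j(1) that by auto
      have "fst i \<le> fst j" using j that fin by simp
      moreover have "disjnt {fst i..snd i} {fst j..snd j}"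
        using disj j(1) that by (auto simp: pairwise_def)
      ultimately have "\<not> fst j \<le> snd i"
        using \<open>fst j \<le> snd j\<close> by (auto simp: disjnt_def)
      then show ?thesis using i by simp
    qed
    have "(\<Sum>i\<in>F - {j}. f (snd i) - f (fst i)) \<le> f (fst j) - f a"
    proof (rule less.hyps)
      show "card (F - {j}) < card F" using fin j(1) by (rule card_Diff1_less)
      show "a \<le> fst j" using bounds[OF j(1)] by simp
      show "pairwise (\<lambda>i j. disjnt {fst i..snd i} {fst j..snd j}) (F - {j})"
        using disj by (rule pairwise_subset) auto
    qed (use fin left in auto)
    moreover have "f (snd j) \<le> f b" using bounds[OF j(1)] \<open>mono f\<close> by (simp add: monoD)
    moreover have "(\<Sum>i\<in>F. f (snd i) - f (fst i)) = f (snd j) - f (fst j) + (\<Sum>i\<in>F - {j}. f (snd i) - f (fst i))"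
      using j(1) fin by (simp add: sum.remove)
    ultimately show ?thesis by linarith
  qed
qed

lemma countable_imp_negligible: "countable (S :: real set) \<Longrightarrow> negligible S"
  unfolding negligible_iff_null_sets
  by (metis countable_imp_null_set_lborel null_sets_completionI)

lemma Vitali_covering_intervals:
  fixes S :: "real set" and K :: "(real \<times> real) set"
  assumes K: "\<And>i. i \<in> K \<Longrightarrow> fst i < snd i"
    and fine: "\<And>x d. x \<in> S \<Longrightarrow> 0 < d \<Longrightarrow> \<exists>i\<in>K. x \<in> {fst i..snd i} \<and> snd i - fst i < d"
  obtains C where "countable C" "C \<subseteq> K" "pairwise (\<lambda>i j. disjnt {fst i..snd i} {fst j..snd j}) C"
    "negligible (S - (\<Union>i\<in>C. {fst i<..<snd i}))"
proof -
  define mid rad where "mid i = (fst i + snd i) / 2" and "rad i = (snd i - fst i) / 2"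
    for i :: "real \<times> real"
  have cball: "cball (mid i) (rad i) = {fst i..snd i}" for i
    by (simp add: mid_def rad_def cball_eq_atLeastAtMost field_simps)
  obtain C where C: "countable C" "C \<subseteq> K"
    "pairwise (\<lambda>i j. disjnt (cball (mid i) (rad i)) (cball (mid j) (rad j))) C"
    "negligible (S - (\<Union>i\<in>C. cball (mid i) (rad i)))"
  proof (rule Vitali_covering_theorem_cballs[of K rad S mid])
    show "0 < rad i" if "i \<in> K" for i using K[OF that] by (simp add: rad_def)
    show "\<exists>i. i \<in> K \<and> x \<in> cball (mid i) (rad i) \<and> rad i < d" if xd: "x \<in> S" "0 < d" for x d
    proof -
      obtain i where "i \<in> K" "x \<in> {fst i..snd i}" "snd i - fst i < d" using fine[OF xd] by blast
      then show ?thesis unfolding cball by (intro exI[of _ i]) (simp add: rad_def)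
    qed
  qed
  have sub: "S - (\<Union>i\<in>C. {fst i<..<snd i}) \<subseteq> (S - (\<Union>i\<in>C. {fst i..snd i})) \<union> (\<Union>i\<in>C. {fst i, snd i})"
  proof
    fix x assume x: "x \<in> S - (\<Union>i\<in>C. {fst i<..<snd i})"
    show "x \<in> (S - (\<Union>i\<in>C. {fst i..snd i})) \<union> (\<Union>i\<in>C. {fst i, snd i})"
    proof (cases "\<exists>i\<in>C. x \<in> {fst i..snd i}")
      case True
      then obtain i where "i \<in> C" "x \<in> {fst i..snd i}" by blast
      moreover have "x \<notin> {fst i<..<snd i}" using x \<open>i \<in> C\<close> by blast
      ultimately show ?thesis by auto
    next
      case False
      then show ?thesis using x by blast
    qed
  qed
  have "negligible (\<Union>i\<in>C. {fst i, snd i})"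
    using C(1) by (intro countable_imp_negligible countable_UN) auto
  then have "negligible (S - (\<Union>i\<in>C. {fst i<..<snd i}))"
    using negligible_subset[OF negligible_Un[OF C(4)[unfolded cball]] sub] by blast
  then show ?thesis by (rule that[OF C(1,2) C(3)[unfolded cball]])
qed

lemma measure_steep_subintervals_le:
  fixes f :: "real \<Rightarrow> real" and C D :: "(real \<times> real) set"
  assumes "mono f" "0 \<le> p" "0 < q" "U \<in> lmeasurable"
    and C: "countable C" "pairwise (\<lambda>i j. disjnt {fst i..snd i} {fst j..snd j}) C"
      "\<And>i. i \<in> C \<Longrightarrow> fst i < snd i \<and> {fst i..snd i} \<subseteq> U \<and> f (snd i) - f (fst i) \<le> p * (snd i - fst i)"
    and D: "countable D" "pairwise (\<lambda>i j. disjnt {fst i..snd i} {fst j..snd j}) D"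
      "\<And>j. j \<in> D \<Longrightarrow> fst j < snd j \<and> q * (snd j - fst j) \<le> f (snd j) - f (fst j)"
      "\<And>j. j \<in> D \<Longrightarrow> \<exists>i\<in>C. {fst j..snd j} \<subseteq> {fst i..snd i}"
  shows "(\<Union>j\<in>D. {fst j<..<snd j}) \<in> lmeasurable"
    and "measure lebesgue (\<Union>j\<in>D. {fst j<..<snd j}) \<le> p / q * measure lebesgue U"
proof -
  obtain P where P: "\<And>j. j \<in> D \<Longrightarrow> P j \<in> C \<and> {fst j..snd j} \<subseteq> {fst (P j)..snd (P j)}"
    using D(4) by metis
  have finite_bound: "measure lebesgue (\<Union>j\<in>G. {fst j<..<snd j}) \<le> p / q * measure lebesgue U"
    if G: "G \<subseteq> D" "finite G" for G
  proof -
    have "measure lebesgue (\<Union>j\<in>G. {fst j<..<snd j}) \<le> (\<Sum>j\<in>G. measure lebesgue {fst j<..<snd j})"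
      using G(2) by (intro measure_UNION_le) auto
    also have "\<dots> \<le> (\<Sum>j\<in>G. (f (snd j) - f (fst j)) / q)"
    proof (rule sum_mono)
      fix j assume "j \<in> G"
      then have "fst j < snd j" "q * (snd j - fst j) \<le> f (snd j) - f (fst j)" using D(3) G(1) by auto
      then show "measure lebesgue {fst j<..<snd j} \<le> (f (snd j) - f (fst j)) / q"
        using \<open>0 < q\<close> by (simp add: field_simps)
    qed
    also have "\<dots> = (\<Sum>i\<in>P ` G. \<Sum>j\<in>{j\<in>G. P j = i}. f (snd j) - f (fst j)) / q"
      by (simp add: sum_divide_distrib sum.image_gen[OF G(2), symmetric])
    also have "\<dots> \<le> (\<Sum>i\<in>P ` G. f (snd i) - f (fst i)) / q"
    proof (intro divide_right_mono sum_mono)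
      \<comment> \<open>The intervals of \<open>G\<close> nested in one interval of \<open>C\<close> can only use up its increment.\<close>
      fix i assume "i \<in> P ` G"
      then have "i \<in> C" using P G(1) by auto
      show "(\<Sum>j\<in>{j\<in>G. P j = i}. f (snd j) - f (fst j)) \<le> f (snd i) - f (fst i)"
      proof (rule mono_sum_increments_le[OF \<open>mono f\<close>])
        show "fst i \<le> snd i" using C(3)[OF \<open>i \<in> C\<close>] by simp
        show "fst i \<le> fst j \<and> fst j \<le> snd j \<and> snd j \<le> snd i" if "j \<in> {j\<in>G. P j = i}" for j
          using that P[of j] D(3)[of j] G(1) by auto
        show "pairwise (\<lambda>i j. disjnt {fst i..snd i} {fst j..snd j}) {j\<in>G. P j = i}"
          using D(2) by (rule pairwise_subset) (use G(1) in auto)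
      qed (use G(2) in auto)
    qed (use \<open>0 < q\<close> in simp)
    also have "\<dots> \<le> (\<Sum>i\<in>P ` G. p * measure lebesgue {fst i..snd i}) / q"
    proof (intro divide_right_mono sum_mono)
      fix i assume "i \<in> P ` G"
      then have "i \<in> C" using P G(1) by auto
      then show "f (snd i) - f (fst i) \<le> p * measure lebesgue {fst i..snd i}"
        using C(3) by fastforce
    qed (use \<open>0 < q\<close> in simp)
    also have "\<dots> = p * measure lebesgue (\<Union>i\<in>P ` G. {fst i..snd i}) / q"
    proof -
      have "pairwise (\<lambda>i j. disjnt {fst i..snd i} {fst j..snd j}) (P ` G)"
        using C(2) by (rule pairwise_subset) (use P G(1) in auto)
      then have "measure lebesgue (\<Union>i\<in>P ` G. {fst i..snd i}) = (\<Sum>i\<in>P ` G. measure lebesgue {fst i..snd i})"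
        using G(2) by (intro measure_UNION') auto
      then show ?thesis by (metis sum_distrib_left)
    qed
    also have "\<dots> \<le> p * measure lebesgue U / q"
    proof (intro divide_right_mono mult_left_mono measure_mono_fmeasurable)
      show "(\<Union>i\<in>P ` G. {fst i..snd i}) \<subseteq> U" using C(3) P G(1) by blast
    qed (use G(2) \<open>U \<in> lmeasurable\<close> \<open>0 \<le> p\<close> \<open>0 < q\<close> in auto)
    finally show ?thesis by simp
  qed
  show "(\<Union>j\<in>D. {fst j<..<snd j}) \<in> lmeasurable"
    by (rule fmeasurable_UN_bound[OF D(1) _ finite_bound]) auto
  show "measure lebesgue (\<Union>j\<in>D. {fst j<..<snd j}) \<le> p / q * measure lebesgue U"
    by (rule measure_UN_bound[OF D(1) _ finite_bound]) auto
qed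

lemma negligible_if_open_covers_shrink:
  fixes E :: "'a::euclidean_space set"
  assumes "0 \<le> \<rho>" "\<rho> < 1" and U: "open U" "E \<subseteq> U" "U \<in> lmeasurable"
    and shrink: "\<And>U \<eta>. open U \<Longrightarrow> E \<subseteq> U \<Longrightarrow> U \<in> lmeasurable \<Longrightarrow> \<eta> > 0 \<Longrightarrow>
      \<exists>V. open V \<and> E \<subseteq> V \<and> V \<in> lmeasurable \<and> measure lebesgue V \<le> \<rho> * measure lebesgue U + \<eta>"
  shows "negligible E"
proof -
  define M where "M = {measure lebesgue V | V. open V \<and> E \<subseteq> V \<and> V \<in> lmeasurable}"
  have "M \<noteq> {}" using U by (auto simp: M_def)
  have "bdd_below M" by (auto simp: M_def bdd_below_def)
  have "0 \<le> Inf M" using \<open>M \<noteq> {}\<close> by (intro cInf_greatest) (auto simp: M_def)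
  have "Inf M \<le> \<rho> * Inf M + e" if "e > 0" for e
  proof -
    define \<epsilon> where "\<epsilon> = e / (\<rho> + 1)"
    have "\<epsilon> > 0" "(\<rho> + 1) * \<epsilon> = e" using that \<open>0 \<le> \<rho>\<close> by (auto simp: \<epsilon>_def)
    obtain V where V: "open V" "E \<subseteq> V" "V \<in> lmeasurable" "measure lebesgue V < Inf M + \<epsilon>"
      using cInf_lessD[OF \<open>M \<noteq> {}\<close>, of "Inf M + \<epsilon>"] \<open>\<epsilon> > 0\<close> by (auto simp: M_def)
    obtain V' where V': "open V'" "E \<subseteq> V'" "V' \<in> lmeasurable"
      "measure lebesgue V' \<le> \<rho> * measure lebesgue V + \<epsilon>"
      using shrink[OF V(1-3) \<open>\<epsilon> > 0\<close>] by blast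
    have "measure lebesgue V' \<in> M" using V'(1-3) unfolding M_def by blast
    then have "Inf M \<le> measure lebesgue V'" using \<open>bdd_below M\<close> by (rule cInf_lower)
    also have "\<dots> \<le> \<rho> * (Inf M + \<epsilon>) + \<epsilon>"
      using V(4) V'(4) \<open>0 \<le> \<rho>\<close> by (smt (verit) mult_left_mono)
    finally show ?thesis using \<open>(\<rho> + 1) * \<epsilon> = e\<close> by (simp add: algebra_simps)
  qed
  then have "Inf M \<le> \<rho> * Inf M" by (rule field_le_epsilon)
  then have "Inf M = 0" using \<open>0 \<le> Inf M\<close> \<open>\<rho> < 1\<close> by (smt (verit) mult_le_cancel_right1)
  show ?thesis
    unfolding negligible_outer
  proof (intro allI impI)
    fix e :: real assume "e > 0"
    then show "\<exists>T. E \<subseteq> T \<and> T \<in> lmeasurable \<and> measure lebesgue T < e"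
      using cInf_lessD[OF \<open>M \<noteq> {}\<close>, of e] \<open>Inf M = 0\<close> by (auto simp: M_def)
  qed
qed

lemma frequently_at_left_realE:
  fixes x :: real
  assumes "\<exists>\<^sub>F y in at_left x. P y" "d > 0"
  obtains y where "x - d < y" "y < x" "P y"
proof -
  have "\<forall>\<^sub>F y in at_left x. y \<in> {x - d<..<x}" using assms(2) by (intro eventually_at_left_real) simp
  from frequently_ex[OF frequently_eventually_frequently[OF assms(1) this]] show ?thesis
    using that by auto
qed

lemma frequently_at_right_realE:
  fixes x :: real
  assumes "\<exists>\<^sub>F y in at_right x. P y" "d > 0"
  obtains y where "x < y" "y < x + d" "P y"
proof -
  have "\<forall>\<^sub>F y in at_right x. y \<in> {x<..<x + d}" using assms(2) by (intro eventually_at_right_real) simp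
  from frequently_ex[OF frequently_eventually_frequently[OF assms(1) this]] show ?thesis
    using that by auto
qed

definition difference_quotient :: "(real \<Rightarrow> real) \<Rightarrow> real \<Rightarrow> real \<Rightarrow> real" where
  "difference_quotient f x y = (f y - f x) / (y - x)"

lemma difference_quotient_commute: "difference_quotient f x y = difference_quotient f y x"
  unfolding difference_quotient_def by (metis minus_diff_eq minus_divide_divide)

lemma difference_quotient_less_iff:
  "x < y \<Longrightarrow> difference_quotient f x y < p \<longleftrightarrow> f y - f x < p * (y - x)"
  "x < y \<Longrightarrow> p < difference_quotient f x y \<longleftrightarrow> p * (y - x) < f y - f x"
  unfolding difference_quotient_def by (simp_all add: divide_less_eq less_divide_eq)

lemma mono_difference_quotient_nonneg: "mono f \<Longrightarrow> 0 \<le> difference_quotient f x y"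
  unfolding difference_quotient_def
  by (cases x y rule: linorder_cases) (auto simp: monoD divide_nonpos_neg)

text \<open>Where the lower left and the upper right Dini derivative of a monotone function are separated
  by \<open>p < q\<close>, covering by short intervals of slope below \<open>p\<close>, and inside them by intervals of slope
  above \<open>q\<close>, shrinks the measure of a cover by the factor \<open>p / q\<close>.\<close>

lemma Dini_gap_cover_shrink:
  fixes f :: "real \<Rightarrow> real"
  assumes "mono f" "0 < p" "p < q" and U: "E \<subseteq> U" "open U" "U \<in> lmeasurable" and "\<eta> > 0"
    and E: "\<And>x. x \<in> E \<Longrightarrow>
      (\<exists>\<^sub>F y in at_left x. difference_quotient f x y < p) \<and> (\<exists>\<^sub>F y in at_right x. q < difference_quotient f x y)"
  shows "\<exists>V. open V \<and> E \<subseteq> V \<and> V \<in> lmeasurable \<and> measure lebesgue V \<le> p / q * measure lebesgue U + \<eta>"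
proof -
  define K where "K = {i. fst i < snd i \<and> {fst i..snd i} \<subseteq> U \<and> f (snd i) - f (fst i) \<le> p * (snd i - fst i)}"
  obtain C where C: "countable C" "C \<subseteq> K" "pairwise (\<lambda>i j. disjnt {fst i..snd i} {fst j..snd j}) C"
    "negligible (E - (\<Union>i\<in>C. {fst i<..<snd i}))"
  proof (rule Vitali_covering_intervals)
    fix x d :: real assume "x \<in> E" "0 < d"
    then obtain r where "r > 0" "ball x r \<subseteq> U" using U openE by blast
    obtain y where y: "x - min d r < y" "y < x" "difference_quotient f x y < p"
      using frequently_at_left_realE[where x = x and d = "min d r"] E[OF \<open>x \<in> E\<close>] \<open>r > 0\<close> \<open>0 < d\<close> by auto
    have "{y..x} \<subseteq> U" using y \<open>ball x r \<subseteq> U\<close> by (force simp: dist_real_def)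
    moreover have "f x - f y \<le> p * (x - y)"
      using y difference_quotient_less_iff(1)[of y x f p] by (simp add: difference_quotient_commute)
    ultimately show "\<exists>i\<in>K. x \<in> {fst i..snd i} \<and> snd i - fst i < d"
      using y by (intro bexI[of _ "(y, x)"]) (auto simp: K_def)
  qed (auto simp: K_def)
  define A where "A = E \<inter> (\<Union>i\<in>C. {fst i<..<snd i})"
  define K' where "K' = {j. fst j < snd j \<and> q * (snd j - fst j) \<le> f (snd j) - f (fst j) \<and>
    (\<exists>i\<in>C. {fst j..snd j} \<subseteq> {fst i..snd i})}"
  obtain D where D: "countable D" "D \<subseteq> K'" "pairwise (\<lambda>i j. disjnt {fst i..snd i} {fst j..snd j}) D"
    "negligible (A - (\<Union>j\<in>D. {fst j<..<snd j}))"
  proof (rule Vitali_covering_intervals)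
    fix x d :: real assume "x \<in> A" "0 < d"
    then obtain i where i: "i \<in> C" "fst i < x" "x < snd i" "x \<in> E" by (auto simp: A_def)
    obtain y where y: "x < y" "y < x + min d (snd i - x)" "q < difference_quotient f x y"
      using frequently_at_right_realE[where x = x and d = "min d (snd i - x)"] E[OF \<open>x \<in> E\<close>] i \<open>0 < d\<close> by auto
    have "q * (y - x) \<le> f y - f x" using y difference_quotient_less_iff(2)[of x y q f] by simp
    then show "\<exists>j\<in>K'. x \<in> {fst j..snd j} \<and> snd j - fst j < d"
      using y i by (intro bexI[of _ "(x, y)"]) (auto simp: K'_def intro!: bexI[of _ i])
  qed (auto simp: K'_def)
  define B where "B = (\<Union>j\<in>D. {fst j<..<snd j})"
  have "\<And>i. i \<in> C \<Longrightarrow> fst i < snd i \<and> {fst i..snd i} \<subseteq> U \<and> f (snd i) - f (fst i) \<le> p * (snd i - fst i)"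
    using C(2) by (auto simp: K_def)
  moreover have "\<And>j. j \<in> D \<Longrightarrow> fst j < snd j \<and> q * (snd j - fst j) \<le> f (snd j) - f (fst j)"
    and "\<And>j. j \<in> D \<Longrightarrow> \<exists>i\<in>C. {fst j..snd j} \<subseteq> {fst i..snd i}"
    using D(2) by (auto simp: K'_def)
  moreover have "0 \<le> p" "0 < q" using \<open>0 < p\<close> \<open>p < q\<close> by auto
  ultimately have B: "B \<in> lmeasurable" "measure lebesgue B \<le> p / q * measure lebesgue U"
    unfolding B_def using measure_steep_subintervals_le[OF \<open>mono f\<close> _ _ U(3) C(1,3) _ D(1,3)] by blast+
  have "E - B \<subseteq> (E - (\<Union>i\<in>C. {fst i<..<snd i})) \<union> (A - B)" by (auto simp: A_def)
  then have "negligible (E - B)"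
    using negligible_subset[OF negligible_Un[OF C(4) D(4)[folded B_def]]] by blast
  then obtain T where T: "open T" "E - B \<subseteq> T" "T \<in> lmeasurable" "measure lebesgue T < \<eta>"
    using negligible_outer_open \<open>\<eta> > 0\<close> by blast
  have "measure lebesgue (B \<union> T) \<le> measure lebesgue B + measure lebesgue T"
    using B T by (intro measure_Un_le) auto
  moreover have "open B" unfolding B_def by (intro open_UN ballI open_greaterThanLessThan)
  ultimately show ?thesis using B T
    by (intro exI[of _ "B \<union> T"] conjI open_Un fmeasurable.Un) auto
qed

lemma negligible_Dini_gap:
  fixes f :: "real \<Rightarrow> real"
  assumes "mono f" "p < q"
  shows "negligible
    {x. (\<exists>\<^sub>F y in at_left x. difference_quotient f x y < p) \<and> (\<exists>\<^sub>F y in at_right x. q < difference_quotient f x y)}"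
    (is "negligible ?E")
proof (cases "0 < p")
  case False
  have "\<not> (\<exists>\<^sub>F y in at_left x. difference_quotient f x y < p)" for x
  proof -
    have "\<forall>y. \<not> difference_quotient f x y < p"
      using False mono_difference_quotient_nonneg[OF \<open>mono f\<close>, of x] by (smt (verit))
    then show ?thesis by (simp add: frequently_def)
  qed
  then show ?thesis by simp
next
  case True
  have "negligible (?E \<inter> {-real n<..<real n})" for n
  proof (rule negligible_if_open_covers_shrink[where \<rho> = "p / q" and U = "{-real n<..<real n}"])
    show "0 \<le> p / q" "p / q < 1" using True \<open>p < q\<close> by auto
    show "\<exists>V. open V \<and> ?E \<inter> {-real n<..<real n} \<subseteq> V \<and> V \<in> lmeasurable \<and>
        measure lebesgue V \<le> p / q * measure lebesgue U + \<eta>"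
      if "open U" "?E \<inter> {-real n<..<real n} \<subseteq> U" "U \<in> lmeasurable" "\<eta> > 0" for U \<eta>
      using Dini_gap_cover_shrink[OF \<open>mono f\<close> True \<open>p < q\<close> that(2,1,3,4)] by blast
  qed auto
  then have "negligible (\<Union>n. ?E \<inter> {-real n<..<real n})" by (intro negligible_countable_Union) auto
  moreover have "?E \<subseteq> (\<Union>n. ?E \<inter> {-real n<..<real n})"
  proof
    fix x assume "x \<in> ?E"
    obtain n where "\<bar>x\<bar> < real n" using reals_Archimedean2 by blast
    then show "x \<in> (\<Union>n. ?E \<inter> {-real n<..<real n})" using \<open>x \<in> ?E\<close> by (auto simp: abs_less_iff intro!: exI[of _ n])
  qed
  ultimately show ?thesis by (rule negligible_subset)
qed

lemma Limsup_le_Liminf_if_no_rational_gap: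
  fixes Q :: "'a \<Rightarrow> real"
  assumes gap: "\<And>p q. p \<in> \<rat> \<Longrightarrow> q \<in> \<rat> \<Longrightarrow> p < q \<Longrightarrow> \<not> ((\<exists>\<^sub>F y in F. Q y < p) \<and> (\<exists>\<^sub>F y in G. q < Q y))"
  shows "Limsup G (\<lambda>y. ereal (Q y)) \<le> Liminf F (\<lambda>y. ereal (Q y))"
proof (rule ccontr)
  assume "\<not> ?thesis"
  then have "Liminf F (\<lambda>y. ereal (Q y)) < Limsup G (\<lambda>y. ereal (Q y))" by simp
  then obtain a where a: "Liminf F (\<lambda>y. ereal (Q y)) < ereal a" "ereal a < Limsup G (\<lambda>y. ereal (Q y))"
    using ereal_dense2 by blast
  then obtain b where b: "ereal a < ereal b" "ereal b < Limsup G (\<lambda>y. ereal (Q y))"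
    using ereal_dense2 by blast
  have ab: "Liminf F (\<lambda>y. ereal (Q y)) < ereal a" "a < b" "ereal b < Limsup G (\<lambda>y. ereal (Q y))"
    using a b by auto
  obtain p where p: "p \<in> \<rat>" "a < p" "p < (a + b) / 2" using Rats_dense_in_real[of a "(a + b) / 2"] ab(2) by auto
  obtain q where q: "q \<in> \<rat>" "(a + b) / 2 < q" "q < b" using Rats_dense_in_real[of "(a + b) / 2" b] ab(2) by auto
  have "\<exists>\<^sub>F y in F. Q y < p"
  proof -
    have "\<not> ereal a \<le> Liminf F (\<lambda>y. ereal (Q y))" using ab(1) by simp
    then obtain c where "c < ereal a" "\<not> (\<forall>\<^sub>F y in F. c < ereal (Q y))"
      unfolding le_Liminf_iff by blast
    then have "\<exists>\<^sub>F y in F. ereal (Q y) \<le> c" by (simp add: not_eventually not_less)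
    then show ?thesis
      by (rule frequently_elim1) (use \<open>c < ereal a\<close> p(2) in \<open>cases c; auto\<close>)
  qed
  moreover have "\<exists>\<^sub>F y in G. q < Q y"
  proof -
    have "\<not> Limsup G (\<lambda>y. ereal (Q y)) \<le> ereal b" using ab(3) by simp
    then obtain c where "ereal b < c" "\<not> (\<forall>\<^sub>F y in G. ereal (Q y) < c)"
      unfolding Limsup_le_iff by blast
    then have "\<exists>\<^sub>F y in G. c \<le> ereal (Q y)" by (simp add: not_eventually not_less)
    then show ?thesis
      by (rule frequently_elim1) (use \<open>ereal b < c\<close> q(3) in \<open>cases c; auto\<close>)
  qed
  ultimately show False using gap[OF p(1) q(1)] p(3) q(2) by auto
qed

lemma differentiable_if_Dini_derivatives_agree:
  fixes f :: "real \<Rightarrow> real" and x :: real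
  defines "Q \<equiv> \<lambda>y. ereal (difference_quotient f x y)"
  assumes "Limsup (at_right x) Q \<le> Liminf (at_left x) Q" "Limsup (at_left x) Q \<le> Liminf (at_right x) Q"
    and bounded: "\<And>y. \<bar>difference_quotient f x y\<bar> \<le> L"
  shows "f differentiable (at x)"
proof -
  have "Liminf (at_left x) Q \<le> Limsup (at_left x) Q" "Liminf (at_right x) Q \<le> Limsup (at_right x) Q"
    by (simp_all add: Liminf_le_Limsup)
  then have eq: "Liminf (at_left x) Q = Limsup (at_right x) Q" "Limsup (at_left x) Q = Limsup (at_right x) Q"
    "Liminf (at_right x) Q = Limsup (at_right x) Q"
    using assms(2,3) by auto
  have "ereal (- L) \<le> Liminf (at_left x) Q" "Limsup (at_right x) Q \<le> ereal L"
  proof -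
    have "- L \<le> difference_quotient f x y" "difference_quotient f x y \<le> L" for y
      using bounded[of y] by (simp_all add: abs_le_iff)
    then show "ereal (- L) \<le> Liminf (at_left x) Q" "Limsup (at_right x) Q \<le> ereal L"
      by (auto simp: Q_def intro!: Liminf_bounded Limsup_bounded always_eventually)
  qed
  then obtain c where c: "Limsup (at_right x) Q = ereal c"
    using eq(1) by (cases "Limsup (at_right x) Q") auto
  have "(Q \<longlongrightarrow> ereal c) (at_left x)" "(Q \<longlongrightarrow> ereal c) (at_right x)"
    using eq c by (auto intro!: Liminf_eq_Limsup)
  then have "(Q \<longlongrightarrow> ereal c) (at x)" by (rule filterlim_split_at)
  then have "(f has_real_derivative c) (at x)"
    by (simp add: Q_def has_field_derivative_iff difference_quotient_def)
  then show ?thesis by (metis DERIV_deriv_iff_real_differentiable DERIV_imp_deriv)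
qed

lemma lipschitz_difference_quotient_bound:
  assumes "L-lipschitz_on S f" "x \<in> S" "y \<in> S"
  shows "\<bar>difference_quotient f x y\<bar> \<le> L"
proof (cases "y = x")
  case True
  then show ?thesis using lipschitz_on_nonneg[OF assms(1)] by (simp add: difference_quotient_def)
next
  case False
  then show ?thesis using lipschitz_onD[OF assms(1,3,2)]
    by (simp add: difference_quotient_def abs_divide divide_le_eq dist_real_def)
qed

lemma difference_quotient_reflect:
  "difference_quotient (\<lambda>y. - f (- y)) (- x) (- y) = difference_quotient f x y"
  using difference_quotient_commute[of f x y] unfolding difference_quotient_def by simp

lemma frequently_at_left_uminus:
  fixes x :: real
  shows "(\<exists>\<^sub>F y in at_left (- x). P y) \<longleftrightarrow> (\<exists>\<^sub>F y in at_right x. P (- y))"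
  by (simp add: at_left_minus frequently_filtermap)

lemma frequently_at_right_uminus:
  fixes x :: real
  shows "(\<exists>\<^sub>F y in at_right (- x). P y) \<longleftrightarrow> (\<exists>\<^sub>F y in at_left x. P (- y))"
  by (simp add: at_right_minus frequently_filtermap)

text \<open>The Lipschitz bound keeps the Dini derivatives finite.\<close>

theorem mono_lipschitz_differentiable_ae:
  fixes f :: "real \<Rightarrow> real"
  assumes "mono f" "L-lipschitz_on UNIV f"
  shows "negligible {x. \<not> f differentiable (at x)}"
proof -
  define g where "g y = - f (- y)" for y
  have "mono g" using \<open>mono f\<close> by (auto simp: g_def mono_def)
  have g_quotient: "difference_quotient g (- x) (- y) = difference_quotient f x y" for x y
    unfolding g_def[abs_def] by (rule difference_quotient_reflect)
  define gap where "gap h p q = {x. (\<exists>\<^sub>F y in at_left x. difference_quotient h x y < p) \<and>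
    (\<exists>\<^sub>F y in at_right x. q < difference_quotient h x y)}" for h p q
  define R :: "(real \<times> real) set" where "R = {(p, q) \<in> \<rat> \<times> \<rat>. p < q}"
  define Z where "Z = (\<Union>(p, q)\<in>R. gap f p q \<union> uminus ` gap g p q)"
  have "negligible Z"
    unfolding Z_def
  proof (rule negligible_countable_Union)
    show "countable ((\<lambda>(p, q). gap f p q \<union> uminus ` gap g p q) ` R)"
      unfolding R_def by (intro countable_image countable_subset[OF _ countable_SIGMA[OF countable_rat countable_rat]]) auto
  next
    fix S assume "S \<in> (\<lambda>(p, q). gap f p q \<union> uminus ` gap g p q) ` R"
    then obtain p q where "p < q" and S: "S = gap f p q \<union> uminus ` gap g p q" by (auto simp: R_def)
    have "negligible (gap f p q)" "negligible (gap g p q)"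
      unfolding gap_def using negligible_Dini_gap \<open>mono f\<close> \<open>mono g\<close> \<open>p < q\<close> by blast+
    then show "negligible S"
      unfolding S by (auto intro!: negligible_differentiable_image_negligible differentiable_on_minus differentiable_on_id)
  qed
  moreover have "f differentiable (at x)" if "x \<notin> Z" for x
  proof (rule differentiable_if_Dini_derivatives_agree)
    show "Limsup (at_right x) (\<lambda>y. ereal (difference_quotient f x y)) \<le>
        Liminf (at_left x) (\<lambda>y. ereal (difference_quotient f x y))"
    proof (rule Limsup_le_Liminf_if_no_rational_gap)
      fix p q :: real assume "p \<in> \<rat>" "q \<in> \<rat>" "p < q"
      then show "\<not> ((\<exists>\<^sub>F y in at_left x. difference_quotient f x y < p) \<and>
          (\<exists>\<^sub>F y in at_right x. q < difference_quotient f x y))"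
        using \<open>x \<notin> Z\<close> by (auto simp: Z_def R_def gap_def)
    qed
    show "Limsup (at_left x) (\<lambda>y. ereal (difference_quotient f x y)) \<le>
        Liminf (at_right x) (\<lambda>y. ereal (difference_quotient f x y))"
    proof (rule Limsup_le_Liminf_if_no_rational_gap)
      fix p q :: real assume "p \<in> \<rat>" "q \<in> \<rat>" "p < q"
      then have "x \<notin> uminus ` gap g p q" using \<open>x \<notin> Z\<close> by (auto simp: Z_def R_def)
      then have "- x \<notin> gap g p q" by (metis minus_minus image_eqI)
      then show "\<not> ((\<exists>\<^sub>F y in at_right x. difference_quotient f x y < p) \<and>
          (\<exists>\<^sub>F y in at_left x. q < difference_quotient f x y))"
        by (simp add: gap_def frequently_at_left_uminus frequently_at_right_uminus g_quotient)
    qed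
    show "\<bar>difference_quotient f x y\<bar> \<le> L" for y
      using lipschitz_difference_quotient_bound[OF assms(2)] by simp
  qed
  ultimately show ?thesis by (metis (mono_tags, lifting) mem_Collect_eq negligible_subset subsetI)
qed

section \<open>Occupancy paths\<close>

lemma AE_lborel_iff_negligible: "(AE x in lborel. P x) \<longleftrightarrow> (\<exists>N. negligible N \<and> {x. \<not> P x} \<subseteq> N)"
  using eventually_ae_filter_negligible[of P] AE_completion_iff[where M = lborel and P = P] by simp

definition cumulative_path_constraints :: "nat \<Rightarrow> real \<Rightarrow> (nat \<Rightarrow> real \<Rightarrow> real) \<Rightarrow> bool" where
  "cumulative_path_constraints I \<beta> \<psi> \<longleftrightarrow>
    (\<forall>i\<le>I. \<forall>x y. 0 \<le> x \<longrightarrow> x < y \<longrightarrow> y \<le> \<beta> \<longrightarrow>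
       (if i = 0 then 0 else \<psi> (i-1) x) \<le> \<psi> i x \<and> \<psi> i y \<le> \<psi> i x \<and> (\<Sum>k\<le>I. \<psi> k x - \<psi> k y) \<le> y - x)"

lemma cumulative_occupancy_Suc:
  "cumulative_occupancy \<gamma> (Suc i) x = cumulative_occupancy \<gamma> i x + \<gamma> (Suc i) x"
  by (simp add: cumulative_occupancy_def)

lemma cumulative_occupancy_has_derivative:
  assumes "(\<gamma> 0 has_real_derivative - \<theta> 0) (at x within S)"
    and "\<And>j. j \<in> {1..I} \<Longrightarrow> (\<gamma> j has_real_derivative \<theta> (j - 1) - \<theta> j) (at x within S)" and "i \<le> I"
  shows "(cumulative_occupancy \<gamma> i has_real_derivative - \<theta> i) (at x within S)"
  using \<open>i \<le> I\<close>
proof (induction i)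
  case 0
  then show ?case using assms(1) by (simp add: cumulative_occupancy_def)
next
  case (Suc i)
  have "(\<gamma> (Suc i) has_real_derivative \<theta> i - \<theta> (Suc i)) (at x within S)"
    using assms(2)[of "Suc i"] Suc.prems by simp
  then have "((\<lambda>t. cumulative_occupancy \<gamma> i t + \<gamma> (Suc i) t) has_real_derivative
      - \<theta> i + (\<theta> i - \<theta> (Suc i))) (at x within S)"
    using Suc by (intro DERIV_add) auto
  then show ?case by (simp add: cumulative_occupancy_Suc[abs_def])
qed

lemma valid_occupancy_imp_cumulative_path_constraints:
  assumes "valid_occupancy I \<beta> \<gamma>"
    and \<psi>: "\<And>i x. i \<le> I \<Longrightarrow> x \<in> {0..\<beta>} \<Longrightarrow> \<psi> i x = cumulative_occupancy \<gamma> i x"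
  shows "cumulative_path_constraints I \<beta> \<psi>"
proof -
  define \<Psi> where "\<Psi> = cumulative_occupancy \<gamma>"
  have ac: "abs_continuous_on 0 \<beta> (\<gamma> j)" if "j \<le> I + 1" for j
    using assms that by (simp add: valid_occupancy_def)
  have simplex: "in_simplex I (\<lambda>j. \<gamma> j x)" if "x \<in> {0..\<beta>}" for x
    using assms that by (simp add: valid_occupancy_def)
  obtain \<theta> N where "negligible N" and rates: "\<And>x. x \<in> {0..\<beta>} - N \<Longrightarrow>
      (\<gamma> 0 has_real_derivative - \<theta> 0 x) (at x within {0..\<beta>}) \<and>
      (\<forall>j\<in>{1..I}. (\<gamma> j has_real_derivative \<theta> (j-1) x - \<theta> j x) (at x within {0..\<beta>})) \<and>
      (\<gamma> (I+1) has_real_derivative \<theta> I x) (at x within {0..\<beta>}) \<and> in_simplex I (\<lambda>j. \<theta> j x)"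
    using assms unfolding valid_occupancy_def AE_lborel_iff_negligible by blast
  have \<Psi>_deriv: "(\<Psi> i has_real_derivative - \<theta> i x) (at x within {0..\<beta>})"
    if "x \<in> {0..\<beta>} - N" "i \<le> I" for x i
    unfolding \<Psi>_def using rates[OF that(1)] that(2) by (intro cumulative_occupancy_has_derivative) auto
  have \<Psi>_ac: "abs_continuous_on 0 \<beta> (\<Psi> i)" if "i \<le> I" for i
    unfolding \<Psi>_def cumulative_occupancy_def[abs_def] using that ac
    by (intro abs_continuous_on_sum) auto
  \<comment> \<open>Both monotonicity statements integrate a nonnegative rate: \<open>\<theta> i\<close>, respectively \<open>\<theta> (I+1)\<close>.\<close>
  have antitone: "mono_on {0..\<beta>} (\<lambda>t. - \<Psi> i t)" if "i \<le> I" for i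
  proof (rule abs_continuous_on_mono_on[OF abs_continuous_on_minus[OF \<Psi>_ac[OF that]] \<open>negligible N\<close>])
    fix x assume "x \<in> {0..\<beta>} - N"
    then show "\<exists>D\<ge>0. ((\<lambda>t. - \<Psi> i t) has_real_derivative D) (at x within {0..\<beta>})"
      using \<Psi>_deriv[of x i] rates[of x] that DERIV_minus
      by (intro exI[of _ "\<theta> i x"]) (fastforce simp: in_simplex_def)
  qed
  have total: "mono_on {0..\<beta>} (\<lambda>t. (\<Sum>k\<le>I. \<Psi> k t) + t)"
  proof (rule abs_continuous_on_mono_on[OF _ \<open>negligible N\<close>])
    show "abs_continuous_on 0 \<beta> (\<lambda>t. (\<Sum>k\<le>I. \<Psi> k t) + t)"
      using \<Psi>_ac abs_continuous_on_lipschitz[OF lipschitz_on_id]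
      by (intro abs_continuous_on_add abs_continuous_on_sum) auto
    fix x assume x: "x \<in> {0..\<beta>} - N"
    have "((\<lambda>t. (\<Sum>k\<le>I. \<Psi> k t) + t) has_real_derivative (\<Sum>k\<le>I. - \<theta> k x) + 1) (at x within {0..\<beta>})"
      using \<Psi>_deriv[OF x] by (intro DERIV_add DERIV_sum DERIV_ident) auto
    moreover have "(\<Sum>k\<le>I. - \<theta> k x) + 1 = \<theta> (I + 1) x" "0 \<le> \<theta> (I + 1) x"
      using rates[OF x] by (auto simp: in_simplex_def sum_negf)
    ultimately show "\<exists>D\<ge>0. ((\<lambda>t. (\<Sum>k\<le>I. \<Psi> k t) + t) has_real_derivative D) (at x within {0..\<beta>})"
      by auto
  qed
  show ?thesis
    unfolding cumulative_path_constraints_def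
  proof (intro allI impI conjI)
    fix i x y assume "i \<le> I" "0 \<le> x" "x < y" "y \<le> \<beta>"
    then have x: "x \<in> {0..\<beta>}" and y: "y \<in> {0..\<beta>}" by auto
    show "(if i = 0 then 0 else \<psi> (i - 1) x) \<le> \<psi> i x"
      using simplex[OF x] \<open>i \<le> I\<close> cumulative_occupancy_Suc[of \<gamma> "i - 1" x] \<psi>[OF _ x]
      by (cases i) (auto simp: cumulative_occupancy_def in_simplex_def)
    show "\<psi> i y \<le> \<psi> i x"
      using mono_onD[OF antitone[OF \<open>i \<le> I\<close>] x y] \<open>x < y\<close> \<psi>[OF \<open>i \<le> I\<close>] x y by (simp add: \<Psi>_def)
    have "(\<Sum>k\<le>I. \<psi> k x - \<psi> k y) = (\<Sum>k\<le>I. \<Psi> k x) - (\<Sum>k\<le>I. \<Psi> k y)"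
      using \<psi> x y by (simp add: \<Psi>_def sum_subtractf)
    then show "(\<Sum>k\<le>I. \<psi> k x - \<psi> k y) \<le> y - x"
      using mono_onD[OF total x y] \<open>x < y\<close> by simp
  qed
qed

lemma mono_has_real_derivative_nonneg:
  fixes f :: "real \<Rightarrow> real"
  assumes "mono f" "(f has_real_derivative D) (at x)"
  shows "0 \<le> D"
proof (rule ccontr)
  assume "\<not> 0 \<le> D"
  then obtain d where "d > 0" "\<And>h. 0 < h \<Longrightarrow> h < d \<Longrightarrow> f (x + h) < f x"
    using DERIV_neg_dec_right[OF assms(2)] by force
  then have "f (x + d / 2) < f x" by simp
  moreover have "f x \<le> f (x + d / 2)" using \<open>d > 0\<close> \<open>mono f\<close> by (simp add: monoD)
  ultimately show False by simp
qed

lemma cumulative_path_constraintsD: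
  assumes "cumulative_path_constraints I \<beta> \<psi>" "0 \<le> x" "x \<le> y" "y \<le> \<beta>"
  shows "k \<le> I \<Longrightarrow> \<psi> k y \<le> \<psi> k x"
    and "(\<Sum>k\<le>I. \<psi> k x - \<psi> k y) \<le> y - x"
    and "k \<le> I \<Longrightarrow> \<psi> k x - \<psi> k y \<le> y - x"
proof -
  have antitone: "\<psi> k y \<le> \<psi> k x" if "k \<le> I" for k
    using assms that unfolding cumulative_path_constraints_def by (cases "x = y") auto
  show "k \<le> I \<Longrightarrow> \<psi> k y \<le> \<psi> k x" by (rule antitone)
  show sum: "(\<Sum>k\<le>I. \<psi> k x - \<psi> k y) \<le> y - x"
    using assms unfolding cumulative_path_constraints_def by (cases "x = y") auto
  assume "k \<le> I"
  then have "\<psi> k x - \<psi> k y \<le> (\<Sum>k\<le>I. \<psi> k x - \<psi> k y)"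
    using antitone by (intro member_le_sum) auto
  then show "\<psi> k x - \<psi> k y \<le> y - x" using sum by linarith
qed

lemma cumulative_path_constraints_ordered:
  assumes constraints: "cumulative_path_constraints I \<beta> \<psi>"
    and "0 < \<beta>" "0 < i" "i \<le> I" "t \<in> {0..\<beta>}"
  shows "\<psi> (i - 1) t \<le> \<psi> i t"
proof (cases "t < \<beta>")
  case True
  then show ?thesis using assms unfolding cumulative_path_constraints_def by auto
next
  case False
  \<comment> \<open>The order is only imposed at \<open>x < \<beta>\<close>; at \<open>\<beta>\<close> it follows from the Lipschitz bound.\<close>
  then have "t = \<beta>" using assms(5) by simp
  show ?thesis
  proof (rule field_le_epsilon)
    fix e :: real assume "0 < e"
    define x where "x = \<beta> - min e \<beta>"
    have x: "0 \<le> x" "x < \<beta>" "\<beta> - x \<le> e" using \<open>0 < e\<close> \<open>0 < \<beta>\<close> by (auto simp: x_def)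
    have "\<psi> (i - 1) \<beta> \<le> \<psi> (i - 1) x"
      using cumulative_path_constraintsD(1)[OF constraints x(1) _ order_refl] x \<open>i \<le> I\<close> by simp
    also have "\<dots> \<le> \<psi> i x"
      using constraints x \<open>0 < i\<close> \<open>i \<le> I\<close> unfolding cumulative_path_constraints_def by auto
    also have "\<dots> \<le> \<psi> i \<beta> + e"
      using cumulative_path_constraintsD(3)[OF constraints x(1) _ order_refl \<open>i \<le> I\<close>] x by simp
    finally show "\<psi> (i - 1) t \<le> \<psi> i t + e" using \<open>t = \<beta>\<close> by simp
  qed
qed

definition occupancy_of_cumulative :: "nat \<Rightarrow> (nat \<Rightarrow> real \<Rightarrow> real) \<Rightarrow> nat \<Rightarrow> real \<Rightarrow> real" where
  "occupancy_of_cumulative I \<Psi> j t =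
    (if j = 0 then \<Psi> 0 t else if j \<le> I then \<Psi> j t - \<Psi> (j - 1) t else if j = I + 1 then 1 - \<Psi> I t else 0)"

lemma cumulative_occupancy_of_cumulative:
  "i \<le> I \<Longrightarrow> cumulative_occupancy (occupancy_of_cumulative I \<Psi>) i t = \<Psi> i t"
  by (induction i) (auto simp: cumulative_occupancy_Suc cumulative_occupancy_def occupancy_of_cumulative_def)

lemma occupancy_of_cumulative_simps:
  "occupancy_of_cumulative I \<Psi> 0 = \<Psi> 0"
  "j \<in> {1..I} \<Longrightarrow> occupancy_of_cumulative I \<Psi> j = (\<lambda>t. \<Psi> j t - \<Psi> (j - 1) t)"
  "occupancy_of_cumulative I \<Psi> (Suc I) = (\<lambda>t. 1 - \<Psi> I t)"
  by (auto simp: occupancy_of_cumulative_def fun_eq_iff)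

lemma occupancy_of_cumulative_in_simplex:
  assumes ordered: "\<And>i. 0 < i \<Longrightarrow> i \<le> I \<Longrightarrow> \<Psi> (i - 1) t \<le> \<Psi> i t"
    and "0 \<le> \<Psi> 0 t" "\<Psi> I t \<le> 1"
  shows "in_simplex I (\<lambda>j. occupancy_of_cumulative I \<Psi> j t)"
  unfolding in_simplex_def
proof
  show "\<forall>j\<le>I + 1. 0 \<le> occupancy_of_cumulative I \<Psi> j t"
    using assms by (auto simp: occupancy_of_cumulative_def le_Suc_eq)
  have "(\<Sum>j\<le>I + 1. occupancy_of_cumulative I \<Psi> j t) =
      cumulative_occupancy (occupancy_of_cumulative I \<Psi>) I t + occupancy_of_cumulative I \<Psi> (I + 1) t"
    by (simp add: cumulative_occupancy_def)
  then show "(\<Sum>j\<le>I + 1. occupancy_of_cumulative I \<Psi> j t) = 1"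
    by (simp add: cumulative_occupancy_of_cumulative occupancy_of_cumulative_simps(3))
qed

definition rate_of_cumulative :: "nat \<Rightarrow> (nat \<Rightarrow> real \<Rightarrow> real) \<Rightarrow> nat \<Rightarrow> real \<Rightarrow> real" where
  "rate_of_cumulative I \<Psi> j x =
    (if j \<le> I then - deriv (\<Psi> j) x else if j = I + 1 then 1 + (\<Sum>k\<le>I. deriv (\<Psi> k) x) else 0)"

lemma occupancy_of_cumulative_rates:
  fixes I :: nat and \<Psi> :: "nat \<Rightarrow> real \<Rightarrow> real" and x :: real
  defines "\<gamma> \<equiv> occupancy_of_cumulative I \<Psi>" and "\<theta> \<equiv> rate_of_cumulative I \<Psi>"
  assumes antitone: "\<And>i. i \<le> I \<Longrightarrow> mono (\<lambda>t. - \<Psi> i t)"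
    and total: "mono (\<lambda>t. (\<Sum>i\<le>I. \<Psi> i t) + t)"
    and differentiable: "\<And>k. k \<le> I \<Longrightarrow> \<Psi> k differentiable (at x)"
  shows "(\<gamma> 0 has_real_derivative - \<theta> 0 x) (at x within S) \<and>
    (\<forall>j\<in>{1..I}. (\<gamma> j has_real_derivative \<theta> (j - 1) x - \<theta> j x) (at x within S)) \<and>
    (\<gamma> (I + 1) has_real_derivative \<theta> I x) (at x within S) \<and> in_simplex I (\<lambda>j. \<theta> j x)"
proof -
  define D where "D k = deriv (\<Psi> k) x" for k
  have D: "(\<Psi> k has_real_derivative D k) (at x)" if "k \<le> I" for k
    using differentiable[OF that] by (simp add: D_def DERIV_deriv_iff_real_differentiable)
  have \<theta>: "\<theta> j x = - D j" if "j \<le> I" for j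
    using that by (simp add: \<theta>_def rate_of_cumulative_def D_def)
  have \<theta>_last: "\<theta> (Suc I) x = 1 + (\<Sum>k\<le>I. D k)"
    by (simp add: \<theta>_def rate_of_cumulative_def D_def)
  have "(\<gamma> 0 has_real_derivative - \<theta> 0 x) (at x)"
    using D[of 0] by (simp add: \<gamma>_def occupancy_of_cumulative_simps \<theta>)
  moreover have "(\<gamma> j has_real_derivative \<theta> (j - 1) x - \<theta> j x) (at x)" if "j \<in> {1..I}" for j
  proof -
    have "j \<le> I" "j - 1 \<le> I" using that by auto
    then show ?thesis using DERIV_diff[OF D[OF \<open>j \<le> I\<close>] D[OF \<open>j - 1 \<le> I\<close>]] that
      by (simp add: \<gamma>_def occupancy_of_cumulative_simps \<theta>)
  qed
  moreover have "(\<gamma> (I + 1) has_real_derivative \<theta> I x) (at x)"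
    using DERIV_diff[OF DERIV_const[of 1] D[OF order_refl]]
    by (simp add: \<gamma>_def occupancy_of_cumulative_simps \<theta>)
  moreover have "0 \<le> \<theta> j x" if "j \<le> I + 1" for j
  proof (cases "j \<le> I")
    case True
    then show ?thesis
      using mono_has_real_derivative_nonneg[OF antitone DERIV_minus[OF D]] by (simp add: \<theta>)
  next
    case False
    then have "j = I + 1" using that by simp
    have "((\<lambda>t. (\<Sum>i\<le>I. \<Psi> i t) + t) has_real_derivative (\<Sum>i\<le>I. D i) + 1) (at x)"
      using D by (intro DERIV_add DERIV_sum DERIV_ident) auto
    from mono_has_real_derivative_nonneg[OF total this] show ?thesis
      using \<open>j = I + 1\<close> by (simp add: \<theta>_last)
  qed
  moreover have "(\<Sum>j\<le>I + 1. \<theta> j x) = 1"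
    by (simp add: \<theta> \<theta>_last sum_negf)
  ultimately show ?thesis
    by (auto simp: in_simplex_def intro: has_field_derivative_at_within)
qed

lemma valid_occupancy_of_cumulative:
  fixes \<Psi> :: "nat \<Rightarrow> real \<Rightarrow> real"
  assumes antitone: "\<And>i. i \<le> I \<Longrightarrow> mono (\<lambda>t. - \<Psi> i t)"
    and total: "mono (\<lambda>t. (\<Sum>i\<le>I. \<Psi> i t) + t)"
    and lipschitz: "\<And>i. i \<le> I \<Longrightarrow> 1-lipschitz_on UNIV (\<Psi> i)"
    and ordered: "\<And>i t. 0 < i \<Longrightarrow> i \<le> I \<Longrightarrow> \<Psi> (i - 1) t \<le> \<Psi> i t"
    and bounds: "\<And>t. 0 \<le> \<Psi> 0 t" "\<And>t. \<Psi> I t \<le> 1"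
  shows "valid_occupancy I \<beta> (occupancy_of_cumulative I \<Psi>)"
  unfolding valid_occupancy_def
proof (intro conjI ballI allI impI)
  fix j assume "j \<le> I + 1"
  have "2-lipschitz_on UNIV (occupancy_of_cumulative I \<Psi> j)"
  proof (cases "j = 0 \<or> j = I + 1")
    case True
    have "1-lipschitz_on UNIV (\<lambda>t. 1 - \<Psi> I t)"
      using lipschitz_on_diff[OF lipschitz_on_constant lipschitz[of I]] by simp
    then show ?thesis
      using True lipschitz[of 0] by (auto simp: occupancy_of_cumulative_simps intro: lipschitz_on_le)
  next
    case False
    then show ?thesis using \<open>j \<le> I + 1\<close> lipschitz_on_diff[OF lipschitz lipschitz, of j "j - 1"]
      by (simp add: occupancy_of_cumulative_simps)
  qed
  then show "abs_continuous_on 0 \<beta> (occupancy_of_cumulative I \<Psi> j)"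
    by (rule abs_continuous_on_lipschitz[OF lipschitz_on_subset]) simp
next
  fix x show "in_simplex I (\<lambda>j. occupancy_of_cumulative I \<Psi> j x)"
    using ordered bounds by (intro occupancy_of_cumulative_in_simplex)
next
  define Z where "Z = (\<Union>k\<le>I. {x. \<not> \<Psi> k differentiable (at x)})"
  have "negligible {x. \<not> \<Psi> k differentiable (at x)}" if "k \<le> I" for k
  proof -
    have "negligible {x. \<not> (\<lambda>t. - \<Psi> k t) differentiable (at x)}"
      using antitone[OF that] lipschitz_on_minus[OF lipschitz[OF that]]
      by (rule mono_lipschitz_differentiable_ae)
    moreover have "\<Psi> k differentiable (at x)" if "(\<lambda>t. - \<Psi> k t) differentiable (at x)" for x
      using differentiable_minus[OF that] by simp
    then have "{x. \<not> \<Psi> k differentiable (at x)} \<subseteq> {x. \<not> (\<lambda>t. - \<Psi> k t) differentiable (at x)}"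
      by blast
    ultimately show ?thesis by (rule negligible_subset)
  qed
  then have "negligible Z" unfolding Z_def by (intro negligible_Union) auto
  then show "\<exists>\<theta>. AE x in lborel. x \<in> {0..\<beta>} \<longrightarrow>
      (occupancy_of_cumulative I \<Psi> 0 has_real_derivative - \<theta> 0 x) (at x within {0..\<beta>}) \<and>
      (\<forall>j\<in>{1..I}. (occupancy_of_cumulative I \<Psi> j has_real_derivative \<theta> (j - 1) x - \<theta> j x)
        (at x within {0..\<beta>})) \<and>
      (occupancy_of_cumulative I \<Psi> (I + 1) has_real_derivative \<theta> I x) (at x within {0..\<beta>}) \<and>
      in_simplex I (\<lambda>j. \<theta> j x)"
    unfolding AE_lborel_iff_negligible
    using occupancy_of_cumulative_rates[OF antitone total] by (intro exI[of _ "rate_of_cumulative I \<Psi>"]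
      exI[of _ Z]) (auto simp: Z_def)
qed

lemma cumulative_path_constraints_lipschitz:
  assumes "cumulative_path_constraints I \<beta> \<psi>" "i \<le> I"
  shows "1-lipschitz_on {0..\<beta>} (\<psi> i)"
proof (rule lipschitz_on_leI)
  fix x y assume xy: "x \<in> {0..\<beta>}" "y \<in> {0..\<beta>}" "x \<le> y"
  have "\<psi> i y \<le> \<psi> i x" "\<psi> i x - \<psi> i y \<le> y - x"
    by (rule cumulative_path_constraintsD(1,3)[OF assms(1)]; use xy assms(2) in simp)+
  then show "dist (\<psi> i x) (\<psi> i y) \<le> 1 * dist x y"
    using xy by (simp add: dist_real_def)
qed simp

lemma cumulative_path_constraints_imp_valid:
  assumes "0 < \<beta>" and constraints: "cumulative_path_constraints I \<beta> \<psi>"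
    and range: "\<And>i. i \<le> I \<Longrightarrow> \<psi> i ` {0..\<beta>} \<subseteq> {0..1}"
  shows "valid_cumulative_path I \<beta> \<psi>"
proof -
  \<comment> \<open>Extending every \<open>\<psi> i\<close> constantly outside \<open>[0, \<beta>]\<close> keeps all the constraints.\<close>
  define c where "c t = max 0 (min \<beta> t)" for t
  define \<Psi> where "\<Psi> i t = \<psi> i (c t)" for i t
  have c: "c t \<in> {0..\<beta>}" "s \<le> t \<Longrightarrow> c s \<le> c t" "s \<le> t \<Longrightarrow> c t - c s \<le> t - s" for s t
    using \<open>0 < \<beta>\<close> by (auto simp: c_def)
  note D = cumulative_path_constraintsD[OF constraints]
  have "valid_occupancy I \<beta> (occupancy_of_cumulative I \<Psi>)"
  proof (rule valid_occupancy_of_cumulative)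
    show "mono (\<lambda>t. - \<Psi> i t)" if "i \<le> I" for i
    proof (rule monoI)
      fix s t :: real assume "s \<le> t"
      have "\<psi> i (c t) \<le> \<psi> i (c s)"
        using c(1)[of s] c(1)[of t] c(2)[OF \<open>s \<le> t\<close>] that by (intro D(1)) auto
      then show "- \<Psi> i s \<le> - \<Psi> i t" by (simp add: \<Psi>_def)
    qed
    show "mono (\<lambda>t. (\<Sum>i\<le>I. \<Psi> i t) + t)"
    proof (rule monoI)
      fix s t :: real assume "s \<le> t"
      have "(\<Sum>k\<le>I. \<psi> k (c s) - \<psi> k (c t)) \<le> c t - c s"
        using c(1)[of s] c(1)[of t] c(2)[OF \<open>s \<le> t\<close>] by (intro D(2)) auto
      then have "(\<Sum>k\<le>I. \<psi> k (c s) - \<psi> k (c t)) \<le> t - s"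
        using c(3)[OF \<open>s \<le> t\<close>] by linarith
      then show "(\<Sum>i\<le>I. \<Psi> i s) + s \<le> (\<Sum>i\<le>I. \<Psi> i t) + t"
        by (simp add: \<Psi>_def sum_subtractf)
    qed
    show "1-lipschitz_on UNIV (\<Psi> i)" if "i \<le> I" for i
    proof -
      have "1-lipschitz_on UNIV c"
        by (rule lipschitz_on_leI) (use c(2,3) in \<open>auto simp: dist_real_def\<close>)
      moreover have "1-lipschitz_on (range c) (\<psi> i)"
        using c(1) by (intro lipschitz_on_subset[OF cumulative_path_constraints_lipschitz[OF constraints that]]) auto
      ultimately have "(1 * 1)-lipschitz_on UNIV (\<lambda>t. \<psi> i (c t))" by (rule lipschitz_on_compose2)
      then show ?thesis by (simp add: \<Psi>_def[abs_def])
    qed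
    show "\<Psi> (i - 1) t \<le> \<Psi> i t" if "0 < i" "i \<le> I" for i t
      using cumulative_path_constraints_ordered[OF constraints \<open>0 < \<beta>\<close> that c(1)] by (simp add: \<Psi>_def)
    show "0 \<le> \<Psi> 0 t" "\<Psi> I t \<le> 1" for t
    proof -
      have "\<psi> 0 (c t) \<in> {0..1}" "\<psi> I (c t) \<in> {0..1}" using range[of 0] range[of I] c(1)[of t] by blast+
      then show "0 \<le> \<Psi> 0 t" "\<Psi> I t \<le> 1" by (simp_all add: \<Psi>_def)
    qed
  qed
  moreover have "cumulative_occupancy (occupancy_of_cumulative I \<Psi>) i x = \<psi> i x"
    if "i \<le> I" "x \<in> {0..\<beta>}" for i x
    using that by (simp add: cumulative_occupancy_of_cumulative \<Psi>_def c_def)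
  ultimately show ?thesis unfolding valid_cumulative_path_def by metis
qed

theorem lemma2p1:
  fixes I :: nat and \<beta> :: real and \<psi> :: "nat \<Rightarrow> real \<Rightarrow> real"
  assumes "\<beta> > 0"
    and "\<forall>i\<le>I. continuous_on {0..\<beta>} (\<psi> i) \<and> \<psi> i ` {0..\<beta>} \<subseteq> {0..1}"
  shows "valid_cumulative_path I \<beta> \<psi> \<longleftrightarrow>
    (\<forall>i\<le>I. \<forall>x y. 0 \<le> x \<longrightarrow> x < y \<longrightarrow> y \<le> \<beta> \<longrightarrow>
       (if i = 0 then 0 else \<psi> (i-1) x) \<le> \<psi> i x \<and>
       \<psi> i y \<le> \<psi> i x \<and>
       (\<Sum>k\<le>I. \<psi> k x - \<psi> k y) \<le> y - x)"
proof -
  have "valid_cumulative_path I \<beta> \<psi> \<longleftrightarrow> cumulative_path_constraints I \<beta> \<psi>"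
  proof
    assume "valid_cumulative_path I \<beta> \<psi>"
    then obtain \<gamma> where "valid_occupancy I \<beta> \<gamma>" "\<forall>i\<le>I. \<forall>x\<in>{0..\<beta>}. \<psi> i x = cumulative_occupancy \<gamma> i x"
      unfolding valid_cumulative_path_def by blast
    then show "cumulative_path_constraints I \<beta> \<psi>"
      by (intro valid_occupancy_imp_cumulative_path_constraints) auto
  next
    assume "cumulative_path_constraints I \<beta> \<psi>"
    then show "valid_cumulative_path I \<beta> \<psi>"
      using cumulative_path_constraints_imp_valid assms by blast
  qed
  then show ?thesis unfolding cumulative_path_constraints_def .
qed

end
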